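(* Let $\sigma>0$ and $1<\theta<\infty$. Then: (i) $w_{\sigma,\theta}$ is continuous with compact support $\mathrm{supp}(w_{\sigma,\theta})\subseteq\mathscr{S}_\theta:=[4,4\zeta(\theta)]$; (ii) $\mathscr{P}_\theta$ is countable and $w_{\sigma,\theta}$ is continuously differentiable on $\mathbb{R}\setminus\mathscr{P}_\theta$, so that $w'_{\sigma,\theta}$ exists a.e.; (iii) $w_{\gamma\sigma,\theta}=(w_{\sigma,\theta})^{\gamma-1}w_{\sigma,\theta}$ for all $\gamma>0$; (iv) $0\leq w_{\sigma,\theta}(\xi)\leq 2^{-\sigma\theta}$ for all $\xi\in\mathbb{R}$.
   Context: For $1<\theta<\infty$ let $a_{n,\theta}:=4\sum_{j=1}^{n-1}j^{-\theta}$ for integers $n\geq2$, so $a_{2,\theta}=4$, $a_{n+1,\theta}=a_{n,\theta}+4n^{-\theta}$ and $a_{\infty,\theta}:=\lim_n a_{n,\theta}=4\zeta(\theta)$ ($\zeta$ the Riemann zeta function). For $\sigma>0$ define $w_{\sigma,\theta}:\mathbb{R}\to[0,\infty)$ on each $[a_{n,\theta},a_{n+1,\theta})$, $n\geq2$, by: $w_{\sigma,\theta}(\xi)=(\xi-a_{n,\theta})^\sigma$ if $a_{n,\theta}\leq\xi<a_{n,\theta}+n^{-\theta}$; $=n^{-\theta\sigma}$ if $a_{n,\theta}+n^{-\theta}\leq\xi<a_{n,\theta}+2n^{-\theta}$; $=(a_{n,\theta}+3n^{-\theta}-\xi)^\sigma$ if $a_{n,\theta}+2n^{-\theta}\leq\xi<a_{n,\theta}+3n^{-\theta}$;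 $=0$ if $a_{n,\theta}+3n^{-\theta}\leq\xi<a_{n+1,\theta}$; and $w_{\sigma,\theta}:=0$ on $\mathbb{R}\setminus[a_{2,\theta},a_{\infty,\theta})$. The set of transition points is $\mathscr{P}_\theta:=\{\xi\in[a_{2,\theta},a_{\infty,\theta}) : \xi=a_{n,\theta}+kn^{-\theta}\text{ for some } n\geq2,\ k\in\{0,1,2,3\}\}\cup\{a_{\infty,\theta}\}$. *)

theory Defs
  imports "HOL-Analysis.Analysis"
begin

definition zeta_real :: "real \<Rightarrow> real" where
  "zeta_real \<theta> = (\<Sum>j. real (Suc j) powr (- \<theta>))"

definition a_seq :: "nat \<Rightarrow> real \<Rightarrow> real" where
  "a_seq n \<theta> = 4 * (\<Sum>j=1..<n. real j powr (- \<theta>))"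

definition a_inf :: "real \<Rightarrow> real" where
  "a_inf \<theta> = 4 * zeta_real \<theta>"

definition w_piece :: "real \<Rightarrow> real \<Rightarrow> nat \<Rightarrow> real \<Rightarrow> real" where
  "w_piece \<sigma> \<theta> n \<xi> =
     (let a = a_seq n \<theta>; h = real n powr (- \<theta>) in
      if \<xi> < a + h then (\<xi> - a) powr \<sigma>
      else if \<xi> < a + 2 * h then real n powr (- \<theta> * \<sigma>)
      else if \<xi> < a + 3 * h then (a + 3 * h - \<xi>) powr \<sigma>
      else 0)"

definition w_fun :: "real \<Rightarrow> real \<Rightarrow> real \<Rightarrow> real" where
  "w_fun \<sigma> \<theta> \<xi> =
     (if \<exists>n\<ge>2. a_seq n \<theta> \<le> \<xi> \<and> \<xi> < a_seq (Suc n) \<theta>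
      then w_piece \<sigma> \<theta> (THE n. n \<ge> 2 \<and> a_seq n \<theta> \<le> \<xi> \<and> \<xi> < a_seq (Suc n) \<theta>) \<xi>
      else 0)"

definition trans_pts :: "real \<Rightarrow> real set" where
  "trans_pts \<theta> =
     {\<xi>. a_seq 2 \<theta> \<le> \<xi> \<and> \<xi> < a_inf \<theta> \<and>
          (\<exists>n\<ge>2. \<exists>k\<in>{0,1,2,3::nat}. \<xi> = a_seq n \<theta> + real k * real n powr (- \<theta>))}
     \<union> {a_inf \<theta>}"

end

theory Submission
  imports Defs
begin

text \<open>Everything reduces to the case \<open>\<sigma> = 1\<close>: \<open>w\<^sub>\<sigma> = (w\<^sub>1)\<^sup>\<sigma>\<close>, where \<open>w\<^sub>1\<close> is a train
  of trapezoids of height \<open>n\<^sup>-\<^sup>\<theta> \<le> 2\<^sup>-\<^sup>\<theta>\<close>, the \<open>n\<close>-th one supported in the block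
  \<open>[a\<^sub>n, a\<^sub>n\<^sub>+\<^sub>1)\<close> and vanishing at its ends. Hence \<open>w\<^sub>1\<close> is 1-Lipschitz (also across
  the accumulation point \<open>4\<zeta>(\<theta>)\<close> of the blocks), which gives continuity, and (iii), (iv)
  are identities for powers. Off the transition points \<open>w\<^sub>1\<close> is locally affine and either
  positive or identically zero, so \<open>w\<^sub>\<sigma>\<close> is locally a \<open>C\<^sup>1\<close> power of an affine function;
  the transition points are countable, hence a null set.\<close>

lemma a_seq_Suc: "1 \<le> n \<Longrightarrow> a_seq (Suc n) \<theta> = a_seq n \<theta> + 4 * real n powr (- \<theta>)"
  by (simp add: a_seq_def algebra_simps)

lemma a_seq_2 [simp]: "a_seq 2 \<theta> = 4"
  by (simp add: a_seq_def numeral_2_eq_2)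

lemma a_seq_mono: "m \<le> n \<Longrightarrow> a_seq m \<theta> \<le> a_seq n \<theta>"
  unfolding a_seq_def by (intro mult_left_mono sum_mono2) auto

lemma a_seq_Suc_eq_partial_sum: "a_seq (Suc n) \<theta> = 4 * (\<Sum>j<n. real (Suc j) powr (- \<theta>))"
  unfolding a_seq_def
  using sum.shift_bounds_Suc_ivl[of "\<lambda>j. real j powr (- \<theta>)" 0 n] by (simp add: atLeast0LessThan)

lemma LIMSEQ_a_seq: assumes "1 < \<theta>" shows "(\<lambda>n. a_seq n \<theta>) \<longlonglongrightarrow> a_inf \<theta>"
proof -
  have "summable (\<lambda>j. real (Suc j) powr (- \<theta>))"
    using assms summable_Suc_iff[of "\<lambda>j. real j powr (- \<theta>)"] summable_real_powr_iff by simp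
  then have "(\<lambda>n. a_seq (Suc n) \<theta>) \<longlonglongrightarrow> a_inf \<theta>"
    unfolding a_seq_Suc_eq_partial_sum a_inf_def zeta_real_def
    by (intro tendsto_mult_left summable_LIMSEQ)
  then show ?thesis by (rule LIMSEQ_imp_Suc)
qed

lemma a_seq_le_a_inf: "1 < \<theta> \<Longrightarrow> a_seq n \<theta> \<le> a_inf \<theta>"
  by (rule incseq_le[OF _ LIMSEQ_a_seq]) (auto simp: incseq_def intro: a_seq_mono)

definition in_block :: "real \<Rightarrow> nat \<Rightarrow> real \<Rightarrow> bool" where
  "in_block \<theta> n \<xi> \<longleftrightarrow> 2 \<le> n \<and> a_seq n \<theta> \<le> \<xi> \<and> \<xi> < a_seq (Suc n) \<theta>"

lemma in_block_unique: "in_block \<theta> n \<xi> \<Longrightarrow> in_block \<theta> m \<xi> \<Longrightarrow> n = m"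
  unfolding in_block_def
  by (metis a_seq_mono linorder_neqE_nat not_less_eq_eq order.strict_trans1 not_le)

lemma w_fun_in_block: "in_block \<theta> n \<xi> \<Longrightarrow> w_fun \<sigma> \<theta> \<xi> = w_piece \<sigma> \<theta> n \<xi>"
  unfolding w_fun_def
  by (subst the_equality[of _ n]) (auto intro: in_block_unique simp: in_block_def)

lemma w_fun_outside_blocks: "\<not> (\<exists>n. in_block \<theta> n \<xi>) \<Longrightarrow> w_fun \<sigma> \<theta> \<xi> = 0"
  unfolding w_fun_def in_block_def by auto

lemma ex_in_block_iff:
  assumes "1 < \<theta>"
  shows "(\<exists>n. in_block \<theta> n \<xi>) \<longleftrightarrow> 4 \<le> \<xi> \<and> \<xi> < a_inf \<theta>"
proof
  assume "\<exists>n. in_block \<theta> n \<xi>"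
  then show "4 \<le> \<xi> \<and> \<xi> < a_inf \<theta>"
    using a_seq_mono[of 2] a_seq_le_a_inf[OF assms] unfolding in_block_def
    by (metis a_seq_2 order.trans order.strict_trans2)
next
  assume \<xi>: "4 \<le> \<xi> \<and> \<xi> < a_inf \<theta>"
  then have "\<exists>k. \<xi> < a_seq k \<theta>"
    using order_tendstoD(1)[OF LIMSEQ_a_seq[OF assms]] by (meson eventually_sequentially order.refl)
  define N where "N = (LEAST k. \<xi> < a_seq k \<theta>)"
  have N: "\<xi> < a_seq N \<theta>" and N_least: "\<And>k. \<xi> < a_seq k \<theta> \<Longrightarrow> N \<le> k"
    unfolding N_def using \<open>\<exists>k. \<xi> < a_seq k \<theta>\<close> by (auto intro: LeastI_ex Least_le)
  have "3 \<le> N"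
    using N \<xi> a_seq_mono[of N 2 \<theta>] by (cases "N \<le> 2") auto
  moreover have "a_seq (N - 1) \<theta> \<le> \<xi>"
    using N_least[of "N - 1"] \<open>3 \<le> N\<close> by fastforce
  ultimately have "in_block \<theta> (N - 1) \<xi>"
    using N by (auto simp: in_block_def)
  then show "\<exists>n. in_block \<theta> n \<xi>" ..
qed

definition trapezoid :: "real \<Rightarrow> real \<Rightarrow> real \<Rightarrow> real" where
  "trapezoid a h x = max 0 (min (min (x - a) h) (a + 3 * h - x))"

lemma trapezoid_nonneg: "0 \<le> trapezoid a h x"
  by (simp add: trapezoid_def)

lemma trapezoid_le_height: "0 \<le> h \<Longrightarrow> trapezoid a h x \<le> h"
  by (simp add: trapezoid_def)

lemma trapezoid_le_left: "a \<le> x \<Longrightarrow> trapezoid a h x \<le> x - a"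
  by (simp add: trapezoid_def)

lemma trapezoid_le_right: "0 \<le> h \<Longrightarrow> x \<le> a + 4 * h \<Longrightarrow> trapezoid a h x \<le> a + 4 * h - x"
  by (simp add: trapezoid_def)

lemma lipschitz_on_trapezoid: "1-lipschitz_on UNIV (trapezoid a h)"
proof (rule lipschitz_onI)
  fix x y :: real
  have min_lip: "\<bar>min p q - min p' q'\<bar> \<le> e" and max_lip: "\<bar>max p q - max p' q'\<bar> \<le> e"
    if "\<bar>p - p'\<bar> \<le> e" "\<bar>q - q'\<bar> \<le> e" for p q p' q' e :: real
    using that unfolding min_def max_def abs_le_iff by auto
  have "\<bar>trapezoid a h x - trapezoid a h y\<bar> \<le> \<bar>x - y\<bar>"
    unfolding trapezoid_def by (intro max_lip min_lip) (auto simp: abs_minus_commute)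
  then show "dist (trapezoid a h x) (trapezoid a h y) \<le> 1 * dist x y"
    by (simp add: dist_real_def)
qed simp

lemma trapezoid_locally_affine:
  assumes "0 < h" "a < x" "x < a + 4 * h" "x \<notin> {a + h, a + 2 * h, a + 3 * h}"
  obtains l u \<alpha> \<beta> where "l < x" "x < u" "a \<le> l" "u \<le> a + 4 * h"
    "\<forall>y\<in>{l<..<u}. trapezoid a h y = \<alpha> * y + \<beta>" "\<alpha> = 0 \<or> (\<forall>y\<in>{l<..<u}. 0 < \<alpha> * y + \<beta>)"
proof -
  consider "x < a + h" | "a + h < x" "x < a + 2 * h" | "a + 2 * h < x" "x < a + 3 * h"
    | "a + 3 * h < x" using assms(4) by fastforce
  then show thesis
  proof cases
    case 1
    then show thesis using assms that[of a "a + h" 1 "- a"] by (auto simp: trapezoid_def)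
  next
    case 2
    then show thesis using assms that[of "a + h" "a + 2 * h" 0 h] by (auto simp: trapezoid_def)
  next
    case 3
    then show thesis using assms that[of "a + 2 * h" "a + 3 * h" "- 1" "a + 3 * h"]
      by (auto simp: trapezoid_def)
  next
    case 4
    then show thesis using assms that[of "a + 3 * h" "a + 4 * h" 0 0] by (auto simp: trapezoid_def)
  qed
qed

lemma w_piece_eq_trapezoid_powr:
  assumes "0 < \<sigma>" "1 \<le> n" "a_seq n \<theta> \<le> x"
  shows "w_piece \<sigma> \<theta> n x = trapezoid (a_seq n \<theta>) (real n powr - \<theta>) x powr \<sigma>"
proof -
  define a h where "a = a_seq n \<theta>" and "h = real n powr - \<theta>"
  have "0 < h" using assms(2) by (simp add: h_def)
  have "real n powr (- \<theta> * \<sigma>) = h powr \<sigma>" by (simp add: h_def powr_powr)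
  then show ?thesis
    using assms(1,3) \<open>0 < h\<close> unfolding w_piece_def trapezoid_def Let_def a_def[symmetric] h_def[symmetric]
    by (cases "x = a + h"; cases "x = a + 2 * h") (auto simp: min_def max_def)
qed

lemma w_fun_1_in_block:
  "in_block \<theta> n x \<Longrightarrow> w_fun 1 \<theta> x = trapezoid (a_seq n \<theta>) (real n powr - \<theta>) x"
  using w_piece_eq_trapezoid_powr[of 1 n \<theta> x] trapezoid_nonneg
  by (simp add: w_fun_in_block in_block_def)

lemma w_fun_eq_w_fun_1_powr: "0 < \<sigma> \<Longrightarrow> w_fun \<sigma> \<theta> x = w_fun 1 \<theta> x powr \<sigma>"
  by (cases "\<exists>n. in_block \<theta> n x")
    (auto simp: w_fun_outside_blocks w_fun_in_block w_fun_1_in_block w_piece_eq_trapezoid_powr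
      in_block_def trapezoid_nonneg)

lemma w_fun_1_nonneg: "0 \<le> w_fun 1 \<theta> x"
  by (cases "\<exists>n. in_block \<theta> n x") (auto simp: w_fun_outside_blocks w_fun_1_in_block trapezoid_nonneg)

lemma w_fun_1_le: assumes "0 \<le> \<theta>" shows "w_fun 1 \<theta> x \<le> 2 powr - \<theta>"
proof (cases "\<exists>n. in_block \<theta> n x")
  case True
  then obtain n where n: "in_block \<theta> n x" ..
  then have "real n powr - \<theta> \<le> 2 powr - \<theta>"
    using assms by (intro powr_mono2') (auto simp: in_block_def)
  moreover have "trapezoid (a_seq n \<theta>) (real n powr - \<theta>) x \<le> real n powr - \<theta>"
    by (simp add: trapezoid_le_height)
  ultimately show ?thesis
    by (simp add: w_fun_1_in_block[OF n])
qed (simp add: w_fun_outside_blocks)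

text \<open>Each trapezoid vanishes at both ends of its block, so across a block boundary both values
  are bounded by the distance of the two points.\<close>
lemma w_fun_1_le_dist_across_blocks:
  assumes "x \<le> y" "\<not> (\<exists>n. in_block \<theta> n x \<and> in_block \<theta> n y)"
  shows "w_fun 1 \<theta> x \<le> y - x" "w_fun 1 \<theta> y \<le> y - x"
proof -
  show "w_fun 1 \<theta> x \<le> y - x"
  proof (cases "\<exists>n. in_block \<theta> n x")
    case True
    then obtain n where n: "in_block \<theta> n x" ..
    moreover have "\<not> in_block \<theta> n y"
      using assms(2) n by blast
    ultimately have "a_seq (Suc n) \<theta> \<le> y" and "2 \<le> n"
      using assms(1) by (auto simp: in_block_def)
    then show ?thesis
      using trapezoid_le_right[of "real n powr - \<theta>" x "a_seq n \<theta>"] n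
      by (simp add: w_fun_1_in_block[OF n] a_seq_Suc in_block_def)
  qed (use assms(1) in \<open>simp add: w_fun_outside_blocks\<close>)
  show "w_fun 1 \<theta> y \<le> y - x"
  proof (cases "\<exists>m. in_block \<theta> m y")
    case True
    then obtain m where m: "in_block \<theta> m y" ..
    moreover have "\<not> in_block \<theta> m x"
      using assms(2) m by blast
    ultimately have "x < a_seq m \<theta>"
      using assms(1) by (auto simp: in_block_def)
    then show ?thesis
      using trapezoid_le_left[of "a_seq m \<theta>" y "real m powr - \<theta>"] m
      by (simp add: w_fun_1_in_block[OF m] in_block_def)
  qed (use assms(1) in \<open>simp add: w_fun_outside_blocks\<close>)
qed

lemma lipschitz_on_w_fun_1: "1-lipschitz_on UNIV (w_fun 1 \<theta>)"
proof -
  have ordered: "\<bar>w_fun 1 \<theta> x - w_fun 1 \<theta> y\<bar> \<le> y - x" if "x \<le> y" for x y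
  proof (cases "\<exists>n. in_block \<theta> n x \<and> in_block \<theta> n y")
    case True
    then obtain n where "in_block \<theta> n x" "in_block \<theta> n y" by blast
    then show ?thesis
      using lipschitz_onD[OF lipschitz_on_trapezoid, of x y] \<open>x \<le> y\<close>
      by (simp add: w_fun_1_in_block dist_real_def)
  next
    case False
    then show ?thesis
      using w_fun_1_le_dist_across_blocks[OF \<open>x \<le> y\<close>] w_fun_1_nonneg[of \<theta> x] w_fun_1_nonneg[of \<theta> y]
      by fastforce
  qed
  have "dist (w_fun 1 \<theta> x) (w_fun 1 \<theta> y) \<le> 1 * dist x y" for x y
  proof (cases "x \<le> y")
    case True
    then show ?thesis using ordered[of x y] by (simp add: dist_real_def)
  next
    case False
    then show ?thesis using ordered[of y x] by (simp add: dist_real_def abs_minus_commute)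
  qed
  then show ?thesis
    by (intro lipschitz_onI) auto
qed

lemma w_fun_locally_affine_powr:
  assumes "0 < \<sigma>" "1 < \<theta>" "x \<notin> trans_pts \<theta>"
  obtains U \<alpha> \<beta> where "open U" "x \<in> U" "\<forall>y\<in>U. w_fun \<sigma> \<theta> y = (\<alpha> * y + \<beta>) powr \<sigma>"
    "\<alpha> = 0 \<or> (\<forall>y\<in>U. 0 < \<alpha> * y + \<beta>)"
proof -
  have "x \<noteq> a_inf \<theta>" using assms(3) by (simp add: trans_pts_def)
  then consider "x < 4" | "a_inf \<theta> < x" | "4 \<le> x" "x < a_inf \<theta>" by linarith
  then show thesis
  proof cases
    case 1
    then show thesis
      using that[of "{..<4}" 0 0] assms(1,2) by (auto simp: w_fun_outside_blocks ex_in_block_iff)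
  next
    case 2
    then show thesis
      using that[of "{a_inf \<theta><..}" 0 0] assms(1,2) by (auto simp: w_fun_outside_blocks ex_in_block_iff)
  next
    case 3
    then obtain n where n: "in_block \<theta> n x" using ex_in_block_iff[OF assms(2)] by blast
    define a h where "a = a_seq n \<theta>" and "h = real n powr - \<theta>"
    have "2 \<le> n" "0 < h" using n by (auto simp: in_block_def h_def)
    have block_end: "a_seq (Suc n) \<theta> = a + 4 * h"
      using \<open>2 \<le> n\<close> by (simp add: a_seq_Suc a_def h_def)
    have "x \<noteq> a + real k * h" if "k \<in> {0, 1, 2, 3}" for k
      using assms(3) that \<open>2 \<le> n\<close> 3 unfolding trans_pts_def a_def h_def a_inf_def a_seq_2 by blast
    from this[of 0] this[of 1] this[of 2] this[of 3]
    have "a < x" "x < a + 4 * h" "x \<notin> {a + h, a + 2 * h, a + 3 * h}"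
      using n block_end by (auto simp: in_block_def a_def)
    then obtain l u \<alpha> \<beta> where lu: "l < x" "x < u" "a \<le> l" "u \<le> a + 4 * h"
      and affine: "\<forall>y\<in>{l<..<u}. trapezoid a h y = \<alpha> * y + \<beta>"
      and sign: "\<alpha> = 0 \<or> (\<forall>y\<in>{l<..<u}. 0 < \<alpha> * y + \<beta>)"
      using trapezoid_locally_affine \<open>0 < h\<close> by blast
    have "w_fun \<sigma> \<theta> y = (\<alpha> * y + \<beta>) powr \<sigma>" if y: "y \<in> {l<..<u}" for y
    proof -
      have "in_block \<theta> n y"
        using y lu \<open>2 \<le> n\<close> block_end by (auto simp: in_block_def a_def)
      then show ?thesis
        using affine y by (simp add: w_fun_eq_w_fun_1_powr[OF assms(1)] w_fun_1_in_block a_def h_def)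
    qed
    then show thesis using that[of "{l<..<u}"] lu sign by auto
  qed
qed

lemma has_real_derivative_affine_powr:
  assumes "\<alpha> = 0 \<or> 0 < \<alpha> * y + \<beta>"
  shows "((\<lambda>y. (\<alpha> * y + \<beta>) powr \<sigma>) has_real_derivative \<sigma> * \<alpha> * (\<alpha> * y + \<beta>) powr (\<sigma> - 1)) (at y)"
  using assms
proof
  assume "\<alpha> = 0"
  then show ?thesis by simp
next
  assume "0 < \<alpha> * y + \<beta>"
  then show ?thesis by (auto intro!: derivative_eq_intros)
qed

lemma continuous_on_affine_powr_deriv:
  fixes \<alpha> \<beta> \<sigma> :: real
  assumes "\<alpha> = 0 \<or> (\<forall>y\<in>U. 0 < \<alpha> * y + \<beta>)"
  shows "continuous_on U (\<lambda>y. \<sigma> * \<alpha> * (\<alpha> * y + \<beta>) powr (\<sigma> - 1))"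
  using assms
proof
  assume pos: "\<forall>y\<in>U. 0 < \<alpha> * y + \<beta>"
  show ?thesis
    using pos by (intro continuous_intros) auto
qed simp

lemma C1_differentiable_on_if_locally_C1:
  fixes f :: "real \<Rightarrow> real"
  assumes "\<And>x. x \<in> S \<Longrightarrow> \<exists>U g g'. open U \<and> x \<in> U \<and> (\<forall>y\<in>U. f y = g y)
             \<and> (\<forall>y\<in>U. (g has_real_derivative g' y) (at y)) \<and> continuous_on U g'"
  shows "f C1_differentiable_on S"
proof -
  have "(f has_real_derivative deriv f x) (at x) \<and> isCont (deriv f) x" if x: "x \<in> S" for x
  proof -
    obtain U g g' where U: "open U" "x \<in> U" "\<forall>y\<in>U. f y = g y"
      and g': "\<forall>y\<in>U. (g has_real_derivative g' y) (at y)" "continuous_on U g'"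
      using assms[OF x] by blast
    have f': "(f has_real_derivative g' y) (at y)" if "y \<in> U" for y
      using has_field_derivative_transform_within_open[of g "g' y" y U f] U g' that by auto
    then have "continuous_on U (deriv f)"
      using g'(2) by (metis DERIV_imp_deriv continuous_on_eq)
    then show ?thesis
      using f'[OF U(2)] U(1,2) DERIV_imp_deriv by (metis continuous_on_eq_continuous_at)
  qed
  then show ?thesis
    unfolding C1_differentiable_on_def has_real_derivative_iff_has_vector_derivative[symmetric]
    by (intro exI[of _ "deriv f"] conjI ballI continuous_at_imp_continuous_on) auto
qed

lemma w_fun_C1_differentiable_off_trans_pts:
  assumes "0 < \<sigma>" "1 < \<theta>"
  shows "w_fun \<sigma> \<theta> C1_differentiable_on (- trans_pts \<theta>)"
proof (rule C1_differentiable_on_if_locally_C1)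
  fix x assume "x \<in> - trans_pts \<theta>"
  then obtain U \<alpha> \<beta> where U: "open U" "x \<in> U" "\<forall>y\<in>U. w_fun \<sigma> \<theta> y = (\<alpha> * y + \<beta>) powr \<sigma>"
    and sign: "\<alpha> = 0 \<or> (\<forall>y\<in>U. 0 < \<alpha> * y + \<beta>)"
    using w_fun_locally_affine_powr[OF assms] by blast
  have "\<forall>y\<in>U. ((\<lambda>y. (\<alpha> * y + \<beta>) powr \<sigma>) has_real_derivative \<sigma> * \<alpha> * (\<alpha> * y + \<beta>) powr (\<sigma> - 1)) (at y)"
    using sign has_real_derivative_affine_powr by blast
  then show "\<exists>U g g'. open U \<and> x \<in> U \<and> (\<forall>y\<in>U. w_fun \<sigma> \<theta> y = g y)
      \<and> (\<forall>y\<in>U. (g has_real_derivative g' y) (at y)) \<and> continuous_on U g'"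
    using U continuous_on_affine_powr_deriv[OF sign]
    by (intro exI[of _ U] exI[of _ "\<lambda>y. (\<alpha> * y + \<beta>) powr \<sigma>"]
        exI[of _ "\<lambda>y. \<sigma> * \<alpha> * (\<alpha> * y + \<beta>) powr (\<sigma> - 1)"]) simp
qed

lemma AE_differentiable_if_C1_off_countable:
  fixes f :: "real \<Rightarrow> real"
  assumes "f C1_differentiable_on (- S)" "countable S"
  shows "AE x in lborel. f differentiable (at x)"
proof (rule AE_mp[OF AE_not_in[OF countable_imp_null_set_lborel[OF assms(2)]]])
  show "AE x in lborel. x \<notin> S \<longrightarrow> f differentiable (at x)"
    using assms(1) unfolding C1_differentiable_on_def by (auto intro: differentiableI_vector)
qed

lemma countable_trans_pts: "countable (trans_pts \<theta>)"
proof (rule countable_subset)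
  show "trans_pts \<theta> \<subseteq> insert (a_inf \<theta>) ((\<lambda>(n, k). a_seq n \<theta> + real k * real n powr - \<theta>) ` UNIV)"
    unfolding trans_pts_def by fast
qed simp

lemma w_fun_support_subset:
  assumes "1 < \<theta>" shows "{\<xi>. w_fun \<sigma> \<theta> \<xi> \<noteq> 0} \<subseteq> {4..a_inf \<theta>}"
proof
  fix \<xi> assume "\<xi> \<in> {\<xi>. w_fun \<sigma> \<theta> \<xi> \<noteq> 0}"
  then have "\<exists>n. in_block \<theta> n \<xi>" using w_fun_outside_blocks by blast
  then show "\<xi> \<in> {4..a_inf \<theta>}" using ex_in_block_iff[OF assms] by simp
qed

lemma continuous_on_w_fun:
  assumes "0 < \<sigma>" shows "continuous_on UNIV (w_fun \<sigma> \<theta>)"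
proof -
  have "continuous_on UNIV (\<lambda>x. w_fun 1 \<theta> x powr \<sigma>)"
    using lipschitz_on_continuous_on[OF lipschitz_on_w_fun_1] w_fun_1_nonneg assms
    by (intro continuous_on_powr' continuous_on_const) auto
  then show ?thesis
    by (simp add: w_fun_eq_w_fun_1_powr[OF assms])
qed

lemma w_fun_bounds:
  assumes "0 < \<sigma>" "0 \<le> \<theta>"
  shows "0 \<le> w_fun \<sigma> \<theta> \<xi> \<and> w_fun \<sigma> \<theta> \<xi> \<le> 2 powr (- \<sigma> * \<theta>)"
proof -
  have "w_fun 1 \<theta> \<xi> powr \<sigma> \<le> (2 powr - \<theta>) powr \<sigma>"
    using w_fun_1_nonneg w_fun_1_le[OF assms(2)] assms(1) by (intro powr_mono2) auto
  then show ?thesis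
    by (simp add: w_fun_eq_w_fun_1_powr[OF assms(1)] powr_powr mult.commute)
qed

lemma w_fun_mult_exponent:
  assumes "0 < \<sigma>" "0 < \<gamma>"
  shows "w_fun (\<gamma> * \<sigma>) \<theta> \<xi> = w_fun \<sigma> \<theta> \<xi> powr (\<gamma> - 1) * w_fun \<sigma> \<theta> \<xi>"
proof -
  define t where "t = w_fun 1 \<theta> \<xi>"
  have "t powr (\<gamma> * \<sigma>) = (t powr \<sigma>) powr (\<gamma> - 1) * t powr \<sigma>"
    using w_fun_1_nonneg[of \<theta> \<xi>]
    by (cases "t = 0") (auto simp: t_def powr_powr powr_add[symmetric] algebra_simps)
  then show ?thesis
    using assms by (simp add: w_fun_eq_w_fun_1_powr[of \<sigma>] w_fun_eq_w_fun_1_powr[of "\<gamma> * \<sigma>"] t_def)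
qed

theorem lemma2p1:
  fixes \<sigma> \<theta> :: real
  assumes "\<sigma> > 0" and "1 < \<theta>"
  shows "continuous_on UNIV (w_fun \<sigma> \<theta>)
       \<and> compact (closure {\<xi>. w_fun \<sigma> \<theta> \<xi> \<noteq> 0})
       \<and> closure {\<xi>. w_fun \<sigma> \<theta> \<xi> \<noteq> 0} \<subseteq> {4 .. 4 * zeta_real \<theta>}
       \<and> countable (trans_pts \<theta>)
       \<and> w_fun \<sigma> \<theta> C1_differentiable_on (- trans_pts \<theta>)
       \<and> (AE \<xi> in lborel. w_fun \<sigma> \<theta> differentiable (at \<xi>))
       \<and> (\<forall>\<gamma>>0. \<forall>\<xi>. w_fun (\<gamma> * \<sigma>) \<theta> \<xi> = (w_fun \<sigma> \<theta> \<xi>) powr (\<gamma> - 1) * w_fun \<sigma> \<theta> \<xi>)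
       \<and> (\<forall>\<xi>. 0 \<le> w_fun \<sigma> \<theta> \<xi> \<and> w_fun \<sigma> \<theta> \<xi> \<le> 2 powr (- \<sigma> * \<theta>))"
proof -
  have support: "closure {\<xi>. w_fun \<sigma> \<theta> \<xi> \<noteq> 0} \<subseteq> {4 .. 4 * zeta_real \<theta>}"
    using w_fun_support_subset[OF assms(2)] unfolding a_inf_def by (intro closure_minimal) auto
  then have "compact (closure {\<xi>. w_fun \<sigma> \<theta> \<xi> \<noteq> 0})"
    by (meson bounded_closed_interval bounded_subset closed_closure compact_eq_bounded_closed)
  moreover have C1: "w_fun \<sigma> \<theta> C1_differentiable_on (- trans_pts \<theta>)"
    using w_fun_C1_differentiable_off_trans_pts[OF assms] .
  moreover have "AE \<xi> in lborel. w_fun \<sigma> \<theta> differentiable (at \<xi>)"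
    using AE_differentiable_if_C1_off_countable[OF C1 countable_trans_pts] .
  ultimately show ?thesis
    using assms support continuous_on_w_fun countable_trans_pts w_fun_mult_exponent w_fun_bounds
    by simp
qed

end
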